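(* With the notation of the context, let $u\in C^2(\Omega)$, let $w$ be a unit vector, and let $C_r,C_b$ be constants such that $d_r,d_b>0$. If $f_r(t)=f_b(t)$ for some $t\in\Omega$, then $\nu_u(t)=e$.
   Context: Let $\Omega\subset\mathbb R^2$, $e=(0,0,1)$, $n_b>n_r>1$. For $\kappa>1$ put $\Phi_\kappa(s)=s-\sqrt{\kappa^2-1+s^2}$. For $u\in C^2(\Omega)$ let $\nu_u(t)=(-\nabla u(t),1)/\sqrt{1+|\nabla u(t)|^2}$. For $c\in\{r,b\}$: $\lambda_c(t)=\Phi_{n_c}(e\cdot\nu_u(t))$, $m_c(t)=\frac1{n_c}\big(e-\lambda_c(t)\nu_u(t)\big)$ (a unit vector), $d_c(t)=\dfrac{C_c-(e-w)\cdot(t,u(t))}{n_c-w\cdot m_c(t)}$, $f_c(t)=(t,u(t))+d_c(t)m_c(t)$. *)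

theory Defs
  imports "HOL-Analysis.Analysis"
begin

definition e3 :: "real^3" where
  "e3 = vector [0, 0, 1]"

definition grad :: "(real^2 \<Rightarrow> real) \<Rightarrow> real^2 \<Rightarrow> real^2" where
  "grad u t = (THE D. GDERIV u t :> D)"

definition C2_on :: "(real^2) set \<Rightarrow> (real^2 \<Rightarrow> real) \<Rightarrow> bool" where
  "C2_on \<Omega> u \<longleftrightarrow>
     (\<forall>t\<in>\<Omega>. u differentiable (at t)) \<and>
     (\<forall>t\<in>\<Omega>. grad u differentiable (at t)) \<and>
     (\<forall>h. continuous_on \<Omega> (\<lambda>t. frechet_derivative (grad u) (at t) h))"

definition Phi :: "real \<Rightarrow> real \<Rightarrow> real" where
  "Phi \<kappa> s = s - sqrt (\<kappa>\<^sup>2 - 1 + s\<^sup>2)"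

definition nu :: "(real^2 \<Rightarrow> real) \<Rightarrow> real^2 \<Rightarrow> real^3" where
  "nu u t = (1 / sqrt (1 + (norm (grad u t))\<^sup>2)) *\<^sub>R
              vector [- (grad u t $ 1), - (grad u t $ 2), 1]"

definition graph_pt :: "(real^2 \<Rightarrow> real) \<Rightarrow> real^2 \<Rightarrow> real^3" where
  "graph_pt u t = vector [t $ 1, t $ 2, u t]"

definition lam :: "real \<Rightarrow> (real^2 \<Rightarrow> real) \<Rightarrow> real^2 \<Rightarrow> real" where
  "lam n u t = Phi n (e3 \<bullet> nu u t)"

definition mdir :: "real \<Rightarrow> (real^2 \<Rightarrow> real) \<Rightarrow> real^2 \<Rightarrow> real^3" where
  "mdir n u t = (1 / n) *\<^sub>R (e3 - lam n u t *\<^sub>R nu u t)"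

definition dist_c :: "real \<Rightarrow> real \<Rightarrow> real^3 \<Rightarrow> (real^2 \<Rightarrow> real) \<Rightarrow> real^2 \<Rightarrow> real" where
  "dist_c n C w u t = (C - (e3 - w) \<bullet> graph_pt u t) / (n - w \<bullet> mdir n u t)"

definition fmap :: "real \<Rightarrow> real \<Rightarrow> real^3 \<Rightarrow> (real^2 \<Rightarrow> real) \<Rightarrow> real^2 \<Rightarrow> real^3" where
  "fmap n C w u t = graph_pt u t + dist_c n C w u t *\<^sub>R mdir n u t"

end

theory Submission
  imports Defs
begin

text \<open>If the red and blue rays meet, then \<open>d\<^sub>r m\<^sub>r = d\<^sub>b m\<^sub>b\<close> with positive \<open>d\<^sub>c\<close> and unit
  vectors \<open>m\<^sub>c\<close>, so \<open>m\<^sub>r = m\<^sub>b\<close>. Clearing denominators in \<open>m\<^sub>c = (e - \<lambda>\<^sub>c \<nu>)/n\<^sub>c\<close> and using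
  \<open>n\<^sub>r \<noteq> n\<^sub>b\<close> shows that \<open>e\<close> is a multiple of \<open>\<nu>\<close>; two parallel unit vectors with positive
  inner product coincide.\<close>

lemma inner_vec3: "(x::real^3) \<bullet> y = x$1 * y$1 + x$2 * y$2 + x$3 * y$3"
  by (simp add: inner_vec_def sum_3)

lemma norm_e3: "norm e3 = 1"
  by (simp add: norm_eq_sqrt_inner inner_vec3 e3_def vector_3)

lemma nu_unit: "norm (nu u t) = 1"
  and inner_e3_nu_pos: "e3 \<bullet> nu u t > 0"
proof -
  let ?g = "grad u t"
  define s where "s = sqrt (1 + (norm ?g)\<^sup>2)"
  have s_pos: "s > 0"
    unfolding s_def by (simp add: add_pos_nonneg)
  have s_sq: "s\<^sup>2 = 1 + (?g$1)\<^sup>2 + (?g$2)\<^sup>2"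
    unfolding s_def power2_norm_eq_inner by (simp add: inner_vec_def sum_2 power2_eq_square)
  have nu: "nu u t = (1/s) *\<^sub>R vector [- (?g$1), - (?g$2), 1]"
    unfolding nu_def s_def by simp
  have "nu u t \<bullet> nu u t = (1 + (?g$1)\<^sup>2 + (?g$2)\<^sup>2) / s\<^sup>2"
    unfolding nu inner_vec3 by (simp add: vector_3 power2_eq_square add_divide_distrib)
  then show "norm (nu u t) = 1"
    using s_pos unfolding s_sq[symmetric] norm_eq_1 by simp
  show "e3 \<bullet> nu u t > 0"
    unfolding nu inner_vec3 e3_def using s_pos by (simp add: vector_3)
qed

text \<open>Snell's law in vector form: this is why \<open>m\<^sub>c\<close> is a unit vector.\<close>
lemma norm_diff_Phi_scaleR:
  fixes e v :: "'a::real_inner"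
  assumes "norm e = 1" and "norm v = 1" and "1 \<le> n"
  shows "norm (e - Phi n (e \<bullet> v) *\<^sub>R v) = n"
proof -
  define c where "c = e \<bullet> v"
  define l where "l = Phi n c"
  have radicand_nonneg: "n\<^sup>2 - 1 + c\<^sup>2 \<ge> 0"
    using assms(3) one_le_power[of n 2] zero_le_power2[of c] by linarith
  have "(norm (e - l *\<^sub>R v))\<^sup>2 = 1 - 2 * l * c + l\<^sup>2"
    using assms(1,2) unfolding norm_eq_1 power2_norm_eq_inner c_def
    by (simp add: inner_diff_left inner_diff_right inner_commute power2_eq_square algebra_simps)
  also have "\<dots> = n\<^sup>2"
    using radicand_nonneg unfolding l_def Phi_def
    by (simp add: power2_eq_square algebra_simps)
  finally show ?thesis
    using assms(3) unfolding l_def c_def by (simp add: power2_eq_iff_nonneg)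
qed

lemma norm_mdir:
  assumes "1 < n"
  shows "norm (mdir n u t) = 1"
  using norm_diff_Phi_scaleR[OF norm_e3 nu_unit, of n u t] assms
  unfolding mdir_def lam_def by simp

lemma unit_vectors_eq_if_positive_multiples_eq:
  fixes x y :: "'a::real_normed_vector"
  assumes "norm x = 1" and "norm y = 1" and "a > 0" and "b > 0"
    and "a *\<^sub>R x = b *\<^sub>R y"
  shows "x = y"
proof -
  have "a = b"
    using arg_cong[OF assms(5), of norm] assms(1-4) by simp
  then show ?thesis
    using assms(3,5) by simp
qed

lemma parallel_if_refracted_directions_eq:
  fixes e v :: "'a::real_vector"
  assumes "n\<^sub>1 \<noteq> n\<^sub>2" and "n\<^sub>1 \<noteq> 0" and "n\<^sub>2 \<noteq> 0"
    and "(1/n\<^sub>1) *\<^sub>R (e - l\<^sub>1 *\<^sub>R v) = (1/n\<^sub>2) *\<^sub>R (e - l\<^sub>2 *\<^sub>R v)"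
  shows "\<exists>k. e = k *\<^sub>R v"
proof
  have "(n\<^sub>1 * n\<^sub>2) *\<^sub>R ((1/n\<^sub>1) *\<^sub>R (e - l\<^sub>1 *\<^sub>R v)) = (n\<^sub>1 * n\<^sub>2) *\<^sub>R ((1/n\<^sub>2) *\<^sub>R (e - l\<^sub>2 *\<^sub>R v))"
    using assms(4) by simp
  then have "n\<^sub>2 *\<^sub>R (e - l\<^sub>1 *\<^sub>R v) = n\<^sub>1 *\<^sub>R (e - l\<^sub>2 *\<^sub>R v)"
    using assms(2,3) by simp
  then have "(n\<^sub>2 - n\<^sub>1) *\<^sub>R e = (n\<^sub>2 * l\<^sub>1 - n\<^sub>1 * l\<^sub>2) *\<^sub>R v"
    by (simp add: algebra_simps)
  then have "inverse (n\<^sub>2 - n\<^sub>1) *\<^sub>R ((n\<^sub>2 - n\<^sub>1) *\<^sub>R e) = inverse (n\<^sub>2 - n\<^sub>1) *\<^sub>R ((n\<^sub>2 * l\<^sub>1 - n\<^sub>1 * l\<^sub>2) *\<^sub>R v)"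
    by simp
  then show "e = ((n\<^sub>2 * l\<^sub>1 - n\<^sub>1 * l\<^sub>2) / (n\<^sub>2 - n\<^sub>1)) *\<^sub>R v"
    using assms(1) by (simp add: divide_inverse_commute)
qed

lemma unit_vectors_eq_if_parallel:
  fixes x y :: "'a::real_inner"
  assumes "norm x = 1" and "norm y = 1" and "x = k *\<^sub>R y" and "x \<bullet> y > 0"
  shows "x = y"
proof -
  have "k = x \<bullet> y"
    using assms(2,3) by (simp add: norm_eq_1)
  moreover have "\<bar>k\<bar> = 1"
    using arg_cong[OF assms(3), of norm] assms(1,2) by simp
  ultimately have "k = 1"
    using assms(4) by linarith
  then show ?thesis
    using assms(3) by simp
qed

theorem lemma3p2:
  fixes \<Omega> :: "(real^2) set" and u :: "real^2 \<Rightarrow> real" and w :: "real^3"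
    and n_r n_b C_r C_b :: real and t :: "real^2"
  assumes "open \<Omega>"
    and "1 < n_r" and "n_r < n_b"
    and "C2_on \<Omega> u"
    and "norm w = 1"
    and "\<forall>s\<in>\<Omega>. dist_c n_r C_r w u s > 0"
    and "\<forall>s\<in>\<Omega>. dist_c n_b C_b w u s > 0"
    and "t \<in> \<Omega>"
    and "fmap n_r C_r w u t = fmap n_b C_b w u t"
  shows "nu u t = e3"
proof -
  have n_b_gt_1: "1 < n_b"
    using assms(2,3) by simp
  have "dist_c n_r C_r w u t *\<^sub>R mdir n_r u t = dist_c n_b C_b w u t *\<^sub>R mdir n_b u t"
    using assms(9) unfolding fmap_def by (rule add_left_imp_eq)
  with norm_mdir[OF assms(2)] norm_mdir[OF n_b_gt_1] assms(6-8)
  have "mdir n_r u t = mdir n_b u t"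
    by (blast intro: unit_vectors_eq_if_positive_multiples_eq)
  then obtain k where "e3 = k *\<^sub>R nu u t"
    unfolding mdir_def using assms(2,3)
    by (auto dest!: parallel_if_refracted_directions_eq[rotated 3])
  then have "e3 = nu u t"
    by (rule unit_vectors_eq_if_parallel[OF norm_e3 nu_unit _ inner_e3_nu_pos])
  then show ?thesis ..
qed

end
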